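(* There is a formula $\phi_{sm}(O_{id},g_{id},t_s,t_f)$ of the language $\mathcal{L}_{mo}$ such that, for every database instance with a MOFT $\mathcal{M}$ and a PIA $\mathcal{P}$ stored as described in the context, the set of tuples satisfying $\phi_{sm}$ is exactly the SM-MOFT $\mathcal{M}^{sm}$ of $\mathcal{M}$ with respect to $\mathcal{P}$.
   Context: Trajectories and stops: a trajectory is a list $\langle (t_0,x_0,y_0),\dots,(t_n,x_n,y_n)\rangle$ of points of $\mathbb{R}^3$ with $t_0<\dots<t_n$. A place of interest (PoI) is a pair $C=(R_C,\Delta_C)$ with $R_C\subseteq\mathbb{R}^2$ a topologically closed polygon, polyline or point and $\Delta_C>0$ real (minimum duration); a PIA is a finite set $\mathcal{P}=\{C_1,\dots,C_N\}$ of PoIs with mutually disjoint geometries. A stop of $T$ w.r.t. $\mathcal{P}$ is a maximal contiguous subtrajectory $\langle (t_i,x_i,y_i),\dots,(t_{i+\ell},x_{i+\ell},y_{i+\ell})\rangle$ such that for some $k$, all $(x_{i+j},y_{i+j})\in R_{C_k}$ ($j=0,\dots,\ell$) and $t_{i+\ell}-t_i>\Delta_{C_k}$; it is a stop in $C_k$ with stop interval $[t_i,t_{i+\ell}]$. A MOFT $\mathcal{M}$ is a finite relation with schema $(O_{id},T,X,Y)$; for each identifier $O_{id}$ its tuples, ordered by time, form a trajectory (with rational coordinates). The SM-MOFT $\mathcal{M}^{sm}$ of $\mathcal{M}$ w.r.t. $\mathcal{P}$ is the set of tuples $(O_{id},g_{id},t_s,t_f)$ such that $O_{id}$ is the identifier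 of a trajectory in $\mathcal{M}$, $g_{id}$ is the identifier of the geometry of a PoI $C_k\in\mathcal{P}$, and the trajectory of $O_{id}$ has a stop in $C_k$ with stop interval $[t_s,t_f]$. Storage of the PIA: the geometries of the PoIs are the geometric elements of a GIS layer $L_{PoI}$, with a rollup relation $r_{L_{PoI}}^{Pt\to G}(x,y,g)$ stating that point $(x,y)$ lies in the geometry with identifier $g$ (given by linear constraints with rational coefficients); in the OLAP part the PoIs are elements $p_{id}$ of the bottom level $PoI_b$ of PoI dimensions $D$, with a relation $\alpha_{L_{PoI},D}^{PoI_b\to G}(p_{id})=g_{id}$ linking each PoI to its geometry identifier, and the minimum duration $\Delta$ of a PoI is stored as an attribute of $PoI_b$, accessed by an attribute function $\beta_{D}^{PoI_b\to \mathrm{duration}}$. The language $\mathcal{L}_{mo}$: multi-sorted first-order logic with real variables (ranging over $\mathbb{R}$), name variables (object identifiers), geometric identifier variables and dimension-level variables; atomic formulas use OLAP rollup functions $f_{D}^{A\to B}$, GIS rollup relations $r_{L}^{G_i\to G_j}$, relations $\alpha_{L,D}^{A\to G}$, attribute functions $\beta_{D}^{A\to B}$, alpha-numeric functions/relations/constants of the OLAP part, a 4-ary relation symbol for each MOFT, $+,\times,0,1,<$ on reals, and equality on all sorts; formulas are closed under Boolean connectives and quantification over all sorts, with standard semantics. *)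

theory Defs
  imports Complex_Main "HOL-Library.Product_Lexorder"
begin

text \<open>Sorts: object identifiers 'o, geometry identifiers 'g, elements of the bottom
  level PoI_b of the PoI dimension 'p, and reals.\<close>

record ('o, 'g, 'p) dbinst =
  moft  :: "('o \<times> real \<times> real \<times> real) set"   \<comment> \<open>MOFT with schema (Oid, T, X, Y)\<close>
  rpt   :: "real \<Rightarrow> real \<Rightarrow> 'g \<Rightarrow> bool"      \<comment> \<open>rollup relation r^{Pt->G}_{L_PoI}(x,y,g)\<close>
  poib  :: "'p set"
  alpha :: "'p \<Rightarrow> 'g"
  beta  :: "'p \<Rightarrow> real"                     \<comment> \<open>attribute function: minimum duration\<close>

definition region :: "('o,'g,'p) dbinst \<Rightarrow> 'p \<Rightarrow> (real \<times> real) set" where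
  "region I p = {(x, y). rpt I x y (alpha I p)}"

definition valid_inst :: "('o,'g,'p) dbinst \<Rightarrow> bool" where
  "valid_inst I \<longleftrightarrow>
     finite (moft I) \<and>
     (\<forall>oi t x y x' y'. (oi, t, x, y) \<in> moft I \<and> (oi, t, x', y') \<in> moft I \<longrightarrow> x = x' \<and> y = y') \<and>
     (\<forall>(oi, t, x, y) \<in> moft I. t \<in> \<rat> \<and> x \<in> \<rat> \<and> y \<in> \<rat>) \<and>
     finite (poib I) \<and>
     (\<forall>p \<in> poib I. beta I p > 0) \<and>
     inj_on (alpha I) (poib I) \<and>
     (\<forall>p \<in> poib I. \<forall>q \<in> poib I. p \<noteq> q \<longrightarrow> region I p \<inter> region I q = {})"

text \<open>The trajectory of identifier oi: its tuples ordered by time (times are distinct, so the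
  lexicographic order on (t,x,y) is the time order).\<close>
definition traj :: "('o,'g,'p) dbinst \<Rightarrow> 'o \<Rightarrow> (real \<times> real \<times> real) list" where
  "traj I oi = sorted_list_of_set {(t, x, y). (oi, t, x, y) \<in> moft I}"

definition ids :: "('o,'g,'p) dbinst \<Rightarrow> 'o set" where
  "ids I = {oi. \<exists>t x y. (oi, t, x, y) \<in> moft I}"

definition stays :: "(real \<times> real \<times> real) list \<Rightarrow> (real \<times> real) set \<Rightarrow> real \<Rightarrow> nat \<Rightarrow> nat \<Rightarrow> bool" where
  "stays T R D i l \<longleftrightarrow> i + l < length T \<and> (\<forall>j \<le> l. snd (T ! (i + j)) \<in> R) \<and>
     fst (T ! (i + l)) - fst (T ! i) > D"

definition stop_cand :: "('o,'g,'p) dbinst \<Rightarrow> (real \<times> real \<times> real) list \<Rightarrow> nat \<Rightarrow> nat \<Rightarrow> bool" where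
  "stop_cand I T i l \<longleftrightarrow> (\<exists>k \<in> poib I. stays T (region I k) (beta I k) i l)"

definition is_stop_in :: "('o,'g,'p) dbinst \<Rightarrow> (real \<times> real \<times> real) list \<Rightarrow> 'p \<Rightarrow> nat \<Rightarrow> nat \<Rightarrow> bool" where
  "is_stop_in I T k i l \<longleftrightarrow> k \<in> poib I \<and> stays T (region I k) (beta I k) i l \<and>
     (\<forall>i' l'. stop_cand I T i' l' \<and> i' \<le> i \<and> i + l \<le> i' + l' \<longrightarrow> i' = i \<and> l' = l)"

definition sm_moft :: "('o,'g,'p) dbinst \<Rightarrow> ('o \<times> 'g \<times> real \<times> real) set" where
  "sm_moft I = {(oi, g, ts, tf). oi \<in> ids I \<and>
     (\<exists>k i l. alpha I k = g \<and> is_stop_in I (traj I oi) k i l \<and>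
        ts = fst (traj I oi ! i) \<and> tf = fst (traj I oi ! (i + l)))}"

datatype dtm = DVar nat
datatype gtm = GVar nat | GAlpha dtm
datatype rtm = RVar nat | RZero | ROne | RPlus rtm rtm | RTimes rtm rtm
  | RBeta dtm

datatype fm =
    FFalse
  | RLess rtm rtm | REq rtm rtm
  | NEq nat nat | GEq gtm gtm | DEq dtm dtm
  | Moft nat rtm rtm rtm
  | RollPt rtm rtm gtm
  | AlphaRel dtm gtm
  | Neg fm | Conj fm fm | Disj fm fm
  | ExR nat fm | ExN nat fm | ExG nat fm | ExD nat fm

record ('o, 'g, 'p) env =
  eR :: "nat \<Rightarrow> real"
  eN :: "nat \<Rightarrow> 'o"
  eG :: "nat \<Rightarrow> 'g"
  eD :: "nat \<Rightarrow> 'p"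

fun evd :: "('o,'g,'p) env \<Rightarrow> dtm \<Rightarrow> 'p" where
  "evd e (DVar n) = eD e n"

fun evg :: "('o,'g,'p) dbinst \<Rightarrow> ('o,'g,'p) env \<Rightarrow> gtm \<Rightarrow> 'g" where
  "evg I e (GVar n) = eG e n"
| "evg I e (GAlpha d) = alpha I (evd e d)"

fun evr :: "('o,'g,'p) dbinst \<Rightarrow> ('o,'g,'p) env \<Rightarrow> rtm \<Rightarrow> real" where
  "evr I e (RVar n) = eR e n"
| "evr I e RZero = 0"
| "evr I e ROne = 1"
| "evr I e (RPlus a b) = evr I e a + evr I e b"
| "evr I e (RTimes a b) = evr I e a * evr I e b"
| "evr I e (RBeta d) = beta I (evd e d)"

fun sat :: "('o,'g,'p) dbinst \<Rightarrow> ('o,'g,'p) env \<Rightarrow> fm \<Rightarrow> bool" where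
  "sat I e FFalse = False"
| "sat I e (RLess a b) = (evr I e a < evr I e b)"
| "sat I e (REq a b) = (evr I e a = evr I e b)"
| "sat I e (NEq m n) = (eN e m = eN e n)"
| "sat I e (GEq a b) = (evg I e a = evg I e b)"
| "sat I e (DEq a b) = (evd e a = evd e b)"
| "sat I e (Moft n t x y) = ((eN e n, evr I e t, evr I e x, evr I e y) \<in> moft I)"
| "sat I e (RollPt x y g) = rpt I (evr I e x) (evr I e y) (evg I e g)"
| "sat I e (AlphaRel d g) = (alpha I (evd e d) = evg I e g)"
| "sat I e (Neg f) = (\<not> sat I e f)"
| "sat I e (Conj f g) = (sat I e f \<and> sat I e g)"
| "sat I e (Disj f g) = (sat I e f \<or> sat I e g)"
| "sat I e (ExR n f) = (\<exists>v::real. sat I (e\<lparr>eR := (eR e)(n := v)\<rparr>) f)"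
| "sat I e (ExN n f) = (\<exists>v. sat I (e\<lparr>eN := (eN e)(n := v)\<rparr>) f)"
| "sat I e (ExG n f) = (\<exists>v. sat I (e\<lparr>eG := (eG e)(n := v)\<rparr>) f)"
| "sat I e (ExD n f) = (\<exists>v \<in> poib I. sat I (e\<lparr>eD := (eD e)(n := v)\<rparr>) f)"

end

theory Submission
  imports Defs
begin

text \<open>Within a trajectory the sample times are strictly increasing, so a contiguous
  subtrajectory is the same thing as the set of samples whose time lies between its first and
  last sample time, and a sample is determined by its time. Hence a stop can be described purely
  in terms of sample times: a pair of sample times ts, tf of the object such that all its samples
  in [ts, tf] lie in the geometry of some PoI k with ts + beta k < tf, and no other pair of
  sample times ts' \<le> ts, tf \<le> tf' has this property for any PoI. This description only uses
  quantification over reals and PoIs, the MOFT relation, the rollup relation, alpha, beta, +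
  and <, so it is a formula of L_mo.\<close>

lemma sorted_distinct_fst_strict_mono:
  fixes xs :: "('a::linorder \<times> 'b::linorder) list"
  assumes "sorted xs" "distinct xs"
    and fst_inj: "\<And>a b. a \<in> set xs \<Longrightarrow> b \<in> set xs \<Longrightarrow> fst a = fst b \<Longrightarrow> a = b"
    and "i < j" "j < length xs"
  shows "fst (xs ! i) < fst (xs ! j)"
proof -
  have "xs ! i \<le> xs ! j" using assms by (simp add: sorted_iff_nth_mono)
  moreover have "xs ! i \<noteq> xs ! j" using assms by (simp add: nth_eq_iff_index_eq)
  moreover have "fst (xs ! i) \<noteq> fst (xs ! j)"
    using fst_inj[OF nth_mem nth_mem] assms calculation(2) by (meson order.strict_trans)
  ultimately show ?thesis by (auto simp: less_eq_prod_def)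
qed

lemma set_traj:
  assumes "valid_inst I"
  shows "set (traj I oi) = {(t, x, y). (oi, t, x, y) \<in> moft I}"
    and "sorted (traj I oi)" and "distinct (traj I oi)"
proof -
  have "{(t, x, y). (oi, t, x, y) \<in> moft I} \<subseteq> (\<lambda>(_, txy). txy) ` moft I"
    by (auto simp: image_iff)
  moreover have "finite (moft I)" using assms by (simp add: valid_inst_def)
  ultimately have "finite {(t, x, y). (oi, t, x, y) \<in> moft I}"
    by (meson finite_imageI finite_subset)
  then show "set (traj I oi) = {(t, x, y). (oi, t, x, y) \<in> moft I}"
    and "sorted (traj I oi)" and "distinct (traj I oi)" by (auto simp: traj_def)
qed

lemma traj_nth_in_moft:
  assumes "valid_inst I" "i < length (traj I oi)" "traj I oi ! i = (t, x, y)"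
  shows "(oi, t, x, y) \<in> moft I"
  using assms nth_mem[OF assms(2)] set_traj(1)[OF assms(1)] by auto

lemma traj_time_strict_mono:
  assumes "valid_inst I" "i < j" "j < length (traj I oi)"
  shows "fst (traj I oi ! i) < fst (traj I oi ! j)"
proof (rule sorted_distinct_fst_strict_mono)
  fix a b assume "a \<in> set (traj I oi)" "b \<in> set (traj I oi)" "fst a = fst b"
  with assms(1) show "a = b"
    unfolding set_traj(1)[OF assms(1)] valid_inst_def by (cases a; cases b) auto
qed (use assms set_traj[OF assms(1)] in auto)

lemma traj_time_le_iff:
  assumes "valid_inst I" "i < length (traj I oi)" "j < length (traj I oi)"
  shows "fst (traj I oi ! i) \<le> fst (traj I oi ! j) \<longleftrightarrow> i \<le> j"
  using traj_time_strict_mono[OF assms(1), of i j oi] traj_time_strict_mono[OF assms(1), of j i oi]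
    assms by (cases i j rule: linorder_cases) auto

lemma traj_time_eq_iff:
  assumes "valid_inst I" "i < length (traj I oi)" "j < length (traj I oi)"
  shows "fst (traj I oi ! i) = fst (traj I oi ! j) \<longleftrightarrow> i = j"
  using traj_time_le_iff[OF assms] traj_time_le_iff[OF assms(1,3,2)] by auto

definition sample_time :: "('o,'g,'p) dbinst \<Rightarrow> 'o \<Rightarrow> real \<Rightarrow> bool" where
  "sample_time I oi t \<longleftrightarrow> (\<exists>x y. (oi, t, x, y) \<in> moft I)"

definition stays_between :: "('o,'g,'p) dbinst \<Rightarrow> 'o \<Rightarrow> 'p \<Rightarrow> real \<Rightarrow> real \<Rightarrow> bool" where
  "stays_between I oi k a b \<longleftrightarrow> a + beta I k < b \<and>
     (\<forall>t x y. (oi, t, x, y) \<in> moft I \<and> a \<le> t \<and> t \<le> b \<longrightarrow> rpt I x y (alpha I k))"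

definition time_stop :: "('o,'g,'p) dbinst \<Rightarrow> 'o \<Rightarrow> 'g \<Rightarrow> real \<Rightarrow> real \<Rightarrow> bool" where
  "time_stop I oi g ts tf \<longleftrightarrow> sample_time I oi ts \<and> sample_time I oi tf \<and>
     (\<exists>k \<in> poib I. alpha I k = g \<and> stays_between I oi k ts tf \<and>
       \<not> (\<exists>ts' tf'. sample_time I oi ts' \<and> sample_time I oi tf' \<and> ts' \<le> ts \<and> tf \<le> tf' \<and>
          (ts', tf') \<noteq> (ts, tf) \<and> (\<exists>k' \<in> poib I. stays_between I oi k' ts' tf')))"

lemma sample_time_iff_traj:
  assumes "valid_inst I"
  shows "sample_time I oi t \<longleftrightarrow> (\<exists>i < length (traj I oi). fst (traj I oi ! i) = t)"
proof
  assume "sample_time I oi t"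
  then obtain x y where "(t, x, y) \<in> set (traj I oi)"
    using set_traj(1)[OF assms] by (auto simp: sample_time_def)
  then show "\<exists>i < length (traj I oi). fst (traj I oi ! i) = t"
    by (metis fst_conv in_set_conv_nth)
next
  assume "\<exists>i < length (traj I oi). fst (traj I oi ! i) = t"
  then obtain i x y where "i < length (traj I oi)" "traj I oi ! i = (t, x, y)"
    by (metis prod.collapse)
  then have "(oi, t, x, y) \<in> moft I" by (rule traj_nth_in_moft[OF assms])
  then show "sample_time I oi t" by (auto simp: sample_time_def)
qed

lemma sample_time_traj_nth:
  "valid_inst I \<Longrightarrow> i < length (traj I oi) \<Longrightarrow> sample_time I oi (fst (traj I oi ! i))"
  by (auto simp: sample_time_iff_traj)

lemma stays_iff_stays_between:
  assumes v: "valid_inst I" and len: "i + l < length (traj I oi)"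
  shows "stays (traj I oi) (region I k) (beta I k) i l \<longleftrightarrow>
    stays_between I oi k (fst (traj I oi ! i)) (fst (traj I oi ! (i + l)))"
proof -
  let ?T = "traj I oi"
  \<comment> \<open>a MOFT sample of oi has a time in [T!i, T!(i+l)] iff it is some T!(i+j) with j \<le> l\<close>
  have "(\<forall>j \<le> l. snd (?T ! (i + j)) \<in> region I k) \<longleftrightarrow>
        (\<forall>t x y. (oi, t, x, y) \<in> moft I \<and> fst (?T ! i) \<le> t \<and> t \<le> fst (?T ! (i + l))
           \<longrightarrow> rpt I x y (alpha I k))"
  proof safe
    fix t x y assume in_region: "\<forall>j \<le> l. snd (?T ! (i + j)) \<in> region I k"
      and sample: "(oi, t, x, y) \<in> moft I" "fst (?T ! i) \<le> t" "t \<le> fst (?T ! (i + l))"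
    obtain m where m: "m < length ?T" "?T ! m = (t, x, y)"
      using sample(1) set_traj(1)[OF v] by (metis (no_types) case_prod_conv in_set_conv_nth mem_Collect_eq)
    have "i \<le> m" "m \<le> i + l"
      using traj_time_le_iff[OF v, of i oi m] traj_time_le_iff[OF v, of m oi "i + l"] sample m len
      by auto
    then show "rpt I x y (alpha I k)"
      using in_region[rule_format, of "m - i"] m by (simp add: region_def)
  next
    fix j assume in_region: "\<forall>t x y. (oi, t, x, y) \<in> moft I \<and> fst (?T ! i) \<le> t \<and>
        t \<le> fst (?T ! (i + l)) \<longrightarrow> rpt I x y (alpha I k)" and "j \<le> l"
    then have j: "i + j < length ?T" "fst (?T ! i) \<le> fst (?T ! (i + j))"
        "fst (?T ! (i + j)) \<le> fst (?T ! (i + l))"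
      using len traj_time_le_iff[OF v] by auto
    obtain t x y where "?T ! (i + j) = (t, x, y)" by (metis prod.collapse)
    with j in_region traj_nth_in_moft[OF v j(1)] show "snd (?T ! (i + j)) \<in> region I k"
      by (simp add: region_def)
  qed
  then show ?thesis using len by (auto simp: stays_def stays_between_def)
qed

lemma stop_cand_iff_stays_between:
  assumes "valid_inst I" "i + l < length (traj I oi)"
  shows "stop_cand I (traj I oi) i l \<longleftrightarrow>
    (\<exists>k \<in> poib I. stays_between I oi k (fst (traj I oi ! i)) (fst (traj I oi ! (i + l))))"
  using stays_iff_stays_between[OF assms] by (simp add: stop_cand_def)

lemma time_stop_if_sm_moft:
  assumes v: "valid_inst I" and "(oi, g, ts, tf) \<in> sm_moft I"
  shows "time_stop I oi g ts tf"
proof -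
  let ?T = "traj I oi"
  obtain k i l where k: "k \<in> poib I" "alpha I k = g"
      and stays: "stays ?T (region I k) (beta I k) i l"
      and maximal: "\<And>i' l'. stop_cand I ?T i' l' \<Longrightarrow> i' \<le> i \<Longrightarrow> i + l \<le> i' + l' \<Longrightarrow> i' = i \<and> l' = l"
      and times: "ts = fst (?T ! i)" "tf = fst (?T ! (i + l))"
    using assms(2) by (auto simp: sm_moft_def is_stop_in_def)
  have len: "i + l < length ?T" using stays by (simp add: stays_def)
  have "ts' = ts \<and> tf' = tf"
    if samples: "sample_time I oi ts'" "sample_time I oi tf'" and order: "ts' \<le> ts" "tf \<le> tf'"
      and cand: "\<exists>k' \<in> poib I. stays_between I oi k' ts' tf'" for ts' tf'
  proof -
    obtain i' m' where i': "i' < length ?T" "fst (?T ! i') = ts'"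
        and m': "m' < length ?T" "fst (?T ! m') = tf'"
      using samples sample_time_iff_traj[OF v] by auto
    have "i' \<le> i" "i + l \<le> m'"
      using traj_time_le_iff[OF v] order i' m' len times by auto
    then have "i' + (m' - i') = m'" by simp
    then have "stop_cand I ?T i' (m' - i')"
      using stop_cand_iff_stays_between[OF v, of i' "m' - i'" oi] cand i' m' by simp
    from maximal[OF this \<open>i' \<le> i\<close>] \<open>i' \<le> i\<close> \<open>i + l \<le> m'\<close> have "i' = i" "m' = i + l"
      by auto
    then show ?thesis using i' m' times by simp
  qed
  moreover have "sample_time I oi ts" "sample_time I oi tf"
    using sample_time_traj_nth[OF v] len times by auto
  moreover have "stays_between I oi k ts tf"
    using stays_iff_stays_between[OF v len] stays times by simp
  ultimately show ?thesis unfolding time_stop_def using k by blast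
qed

lemma sm_moft_if_time_stop:
  assumes v: "valid_inst I" and "time_stop I oi g ts tf"
  shows "(oi, g, ts, tf) \<in> sm_moft I"
proof -
  let ?T = "traj I oi"
  obtain k where k: "k \<in> poib I" "alpha I k = g" "stays_between I oi k ts tf"
    and maximal: "\<not> (\<exists>ts' tf'. sample_time I oi ts' \<and> sample_time I oi tf' \<and> ts' \<le> ts \<and>
        tf \<le> tf' \<and> (ts', tf') \<noteq> (ts, tf) \<and> (\<exists>k' \<in> poib I. stays_between I oi k' ts' tf'))"
    using assms(2) by (auto simp: time_stop_def)
  obtain i m where i: "i < length ?T" "fst (?T ! i) = ts" and m: "m < length ?T" "fst (?T ! m) = tf"
    using assms(2) sample_time_iff_traj[OF v] by (auto simp: time_stop_def)
  have "ts < tf"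
    using k v by (auto simp: stays_between_def valid_inst_def)
  then have "i \<le> m" using traj_time_le_iff[OF v i(1) m(1)] i m by simp
  define l where "l = m - i"
  have m_eq: "m = i + l" using \<open>i \<le> m\<close> by (simp add: l_def)
  have "i' = i \<and> l' = l" if "stop_cand I ?T i' l'" "i' \<le> i" "i + l \<le> i' + l'" for i' l'
  proof -
    have len': "i' + l' < length ?T" using that(1) by (auto simp: stop_cand_def stays_def)
    have "fst (?T ! i') \<le> ts" "tf \<le> fst (?T ! (i' + l'))"
      using traj_time_le_iff[OF v] that i m m_eq len' by auto
    moreover have "sample_time I oi (fst (?T ! i'))" "sample_time I oi (fst (?T ! (i' + l')))"
      using sample_time_traj_nth[OF v] len' by auto
    moreover have "\<exists>k' \<in> poib I. stays_between I oi k' (fst (?T ! i')) (fst (?T ! (i' + l')))"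
      using stop_cand_iff_stays_between[OF v len'] that(1) by simp
    ultimately have "fst (?T ! i') = ts" "fst (?T ! (i' + l')) = tf" using maximal by blast+
    then have "i' = i" "i' + l' = i + l"
      using traj_time_eq_iff[OF v, of i' oi i] traj_time_eq_iff[OF v, of "i' + l'" oi "i + l"]
        i m m_eq len' by auto
    then show ?thesis by simp
  qed
  moreover have "stays ?T (region I k) (beta I k) i l"
    using stays_iff_stays_between[OF v] k i m m_eq by auto
  moreover have "oi \<in> ids I" using assms(2) by (auto simp: time_stop_def sample_time_def ids_def)
  ultimately show ?thesis
    unfolding sm_moft_def is_stop_in_def using k i m m_eq by blast
qed

lemma time_stop_iff_sm_moft:
  "valid_inst I \<Longrightarrow> time_stop I oi g ts tf \<longleftrightarrow> (oi, g, ts, tf) \<in> sm_moft I"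
  using time_stop_if_sm_moft sm_moft_if_time_stop by metis

text \<open>Free variables: name 0 (the object), geometry 0, reals 0 and 1 (ts, tf). Bound
  variables use fresh indices (10 and above) so that no free variable is captured.\<close>

definition Le :: "rtm \<Rightarrow> rtm \<Rightarrow> fm" where
  "Le a b = Disj (RLess a b) (REq a b)"

definition SampleTime :: "rtm \<Rightarrow> fm" where
  "SampleTime t = ExR 10 (ExR 11 (Moft 0 t (RVar 10) (RVar 11)))"

definition StaysBetween :: "dtm \<Rightarrow> rtm \<Rightarrow> rtm \<Rightarrow> fm" where
  "StaysBetween k a b = Conj (RLess (RPlus a (RBeta k)) b)
     (Neg (ExR 20 (ExR 21 (ExR 22 (Conj (Moft 0 (RVar 20) (RVar 21) (RVar 22))
        (Conj (Le a (RVar 20)) (Conj (Le (RVar 20) b)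
          (Neg (RollPt (RVar 21) (RVar 22) (GAlpha k))))))))))"

definition phi_sm :: fm where
  "phi_sm = Conj (SampleTime (RVar 0)) (Conj (SampleTime (RVar 1))
     (ExD 0 (Conj (AlphaRel (DVar 0) (GVar 0)) (Conj (StaysBetween (DVar 0) (RVar 0) (RVar 1))
       (Neg (ExR 12 (ExR 13 (Conj (SampleTime (RVar 12)) (Conj (SampleTime (RVar 13))
         (Conj (Le (RVar 12) (RVar 0)) (Conj (Le (RVar 1) (RVar 13))
           (Conj (Neg (Conj (REq (RVar 12) (RVar 0)) (REq (RVar 13) (RVar 1))))
             (ExD 1 (StaysBetween (DVar 1) (RVar 12) (RVar 13)))))))))))))))"

lemma sat_phi_sm: "sat I e phi_sm \<longleftrightarrow> time_stop I (eN e 0) (eG e 0) (eR e 0) (eR e 1)"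
  unfolding phi_sm_def SampleTime_def StaysBetween_def Le_def
    time_stop_def sample_time_def stays_between_def
  by (auto simp: less_eq_real_def)

theorem proposition3:
  "\<exists>\<phi>::fm. \<forall>(I::('o,'g,'p) dbinst). valid_inst I \<longrightarrow>
     (\<forall>e::('o,'g,'p) env.
        sat I e \<phi> \<longleftrightarrow> (eN e 0, eG e 0, eR e 0, eR e 1) \<in> sm_moft I)"
  by (intro exI[of _ phi_sm] allI impI) (simp add: sat_phi_sm time_stop_iff_sm_moft)

end
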